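(* Let $n\geq 3$ and let $\ast_n$ be the star graph. Then for every subgroup $G$ of $Homeo(\ast_n)$ we have $h(G,\ast_n)\geq 2$; moreover $h(Homeo(\ast_n),\ast_n)=2$.
   Context: For $n\geq 3$, the star graph $\ast_n$ is the topological graph with $n+1$ vertices $0,1,\ldots,n$ and $n$ edges $[0,1],[0,2],\ldots,[0,n]$, i.e. the union of $n$ arcs, the $i$-th having end points $0$ and $i$, any two of which meet only at the common end point $0$. For a topological space $A$, $Homeo(A)$ denotes the group of all homeomorphisms $A\to A$ under composition. For a subgroup $G$ of $Homeo(A)$ (acting by $gx=g(x)$), a nonempty subset $Y\subseteq A$ is invariant if $g(y)\in Y$ for all $g\in G$, $y\in Y$. The height of $(G,A)$ is $h(G,A)=\sup\{n\geq 0:$ there exist distinct closed invariant subsets $Y_0\subset Y_1\subset\cdots\subset Y_n=A\}$ (possibly $+\infty$). *)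

theory Defs
  imports "HOL-Analysis.Analysis" "HOL-Library.Extended_Nat"
begin

text \<open>The star graph with n edges, realised concretely in the plane as the union of
 the n straight segments from the centre 0 to the n-th roots of unity; the i-th edge
 is the segment [0, cis(2 pi i / n)].\<close>
definition star_graph :: "nat \<Rightarrow> complex set" where
  "star_graph n = (\<Union>i\<in>{1..n}. closed_segment 0 (cis (2 * pi * real i / real n)))"

text \<open>Homeo(A): homeomorphisms A \<rightarrow> A, normalised to be the identity outside A
 so that each homeomorphism has a unique representative as a HOL function.\<close>
definition Homeo :: "'a::topological_space set \<Rightarrow> ('a \<Rightarrow> 'a) set" where
  "Homeo A = {f. (\<exists>g. homeomorphism A A f g) \<and> (\<forall>x. x \<notin> A \<longrightarrow> f x = x)}"

definition homeo_subgroup :: "('a \<Rightarrow> 'a) set \<Rightarrow> 'a::topological_space set \<Rightarrow> bool" where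
  "homeo_subgroup G A \<longleftrightarrow> G \<subseteq> Homeo A \<and> id \<in> G \<and>
     (\<forall>f\<in>G. \<forall>g\<in>G. f \<circ> g \<in> G) \<and> (\<forall>f\<in>G. \<exists>g\<in>G. g \<circ> f = id)"

definition invariant_set :: "('a \<Rightarrow> 'a) set \<Rightarrow> 'a set \<Rightarrow> 'a set \<Rightarrow> bool" where
  "invariant_set G A Y \<longleftrightarrow> Y \<noteq> {} \<and> Y \<subseteq> A \<and> (\<forall>g\<in>G. \<forall>y\<in>Y. g y \<in> Y)"

definition closed_invariant :: "('a \<Rightarrow> 'a) set \<Rightarrow> 'a::topological_space set \<Rightarrow> 'a set \<Rightarrow> bool" where
  "closed_invariant G A Y \<longleftrightarrow> invariant_set G A Y \<and> closedin (top_of_set A) Y"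

definition height :: "('a \<Rightarrow> 'a) set \<Rightarrow> 'a::topological_space set \<Rightarrow> enat" where
  "height G A = Sup {enat k | k. \<exists>Y :: nat \<Rightarrow> 'a set.
      (\<forall>i\<le>k. closed_invariant G A (Y i)) \<and> (\<forall>i<k. Y i \<subset> Y (Suc i)) \<and> Y k = A}"

end

theory Submission
  imports Defs
begin

(* The centre 0 is the only point of the star whose complement splits into three nonempty
   disjoint open pieces, and the ends are the only other points whose complement stays
   connected. Hence every homeomorphism fixes 0 and maps ends to ends, so {0}, {0} together
   with the ends, and the whole star form a strict chain of closed invariant sets for every
   group of homeomorphisms. Conversely, rotations and the radial power maps z -> |z|^(p-1) z
   act transitively on the ends and on the remaining nonzero points, so a closed Homeo-invariant
   set containing such a point contains every open edge and hence everything. The proper closed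
   Homeo-invariant sets are therefore {0}, the ends and their union, and these admit no strict
   chain of length three. *)

definition splits_in_three :: "'a::topological_space set \<Rightarrow> 'a \<Rightarrow> bool" where
  "splits_in_three A x \<longleftrightarrow> (\<exists>U1 U2 U3. openin (top_of_set A) U1 \<and> openin (top_of_set A) U2 \<and>
     openin (top_of_set A) U3 \<and> U1 \<noteq> {} \<and> U2 \<noteq> {} \<and> U3 \<noteq> {} \<and>
     U1 \<inter> U2 = {} \<and> U1 \<inter> U3 = {} \<and> U2 \<inter> U3 = {} \<and> U1 \<union> U2 \<union> U3 = A - {x})"

lemma connected_subset_openin_Un:
  assumes "connected C" "C \<subseteq> A" "openin (top_of_set A) U" "openin (top_of_set A) V"
    "U \<inter> V = {}" "C \<subseteq> U \<union> V"
  shows "C \<subseteq> U \<or> C \<subseteq> V"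
proof (rule ccontr)
  assume "\<not> ?thesis"
  then have "U \<inter> C \<noteq> {}" "V \<inter> C \<noteq> {}" using assms(6) by blast+
  moreover have "connectedin (top_of_set A) C" using assms(1,2) by (simp add: connectedin_subtopology)
  ultimately show False using assms(5) by (intro connectedinD[OF _ assms(3,4,6)]) auto
qed

lemma connected_subset_openin_Un3:
  assumes "connected C" "C \<subseteq> A" "openin (top_of_set A) U1" "openin (top_of_set A) U2"
    "openin (top_of_set A) U3" "U1 \<inter> U2 = {}" "U1 \<inter> U3 = {}" "U2 \<inter> U3 = {}" "C \<subseteq> U1 \<union> U2 \<union> U3"
  shows "C \<subseteq> U1 \<or> C \<subseteq> U2 \<or> C \<subseteq> U3"
proof -
  have "C \<subseteq> U1 \<or> C \<subseteq> U2 \<union> U3"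
    using connected_subset_openin_Un[OF assms(1-3) openin_Un[OF assms(4,5)]] assms(6-9) by blast
  then show ?thesis
    using connected_subset_openin_Un[OF assms(1,2,4,5,8)] by blast
qed

lemma not_splits_in_three_if_connected_Un:
  assumes "A - {x} = P \<union> R" "connected P" "connected R"
  shows "\<not> splits_in_three A x"
proof
  assume "splits_in_three A x"
  then obtain U1 U2 U3 where U: "openin (top_of_set A) U1" "openin (top_of_set A) U2"
     "openin (top_of_set A) U3" "U1 \<noteq> {}" "U2 \<noteq> {}" "U3 \<noteq> {}"
     "U1 \<inter> U2 = {}" "U1 \<inter> U3 = {}" "U2 \<inter> U3 = {}" "U1 \<union> U2 \<union> U3 = A - {x}"
    unfolding splits_in_three_def by blast
  have sub: "P \<subseteq> A" "R \<subseteq> A" and cov: "P \<subseteq> U1 \<union> U2 \<union> U3" "R \<subseteq> U1 \<union> U2 \<union> U3"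
    using assms(1) U(10) by auto
  have "P \<subseteq> U1 \<or> P \<subseteq> U2 \<or> P \<subseteq> U3"
    by (rule connected_subset_openin_Un3[OF assms(2) sub(1) U(1-3,7-9) cov(1)])
  moreover have "R \<subseteq> U1 \<or> R \<subseteq> U2 \<or> R \<subseteq> U3"
    by (rule connected_subset_openin_Un3[OF assms(3) sub(2) U(1-3,7-9) cov(2)])
  moreover have "U1 \<union> U2 \<union> U3 \<subseteq> P \<union> R" using assms(1) U(10) by auto
  ultimately show False using U(4-9) by blast
qed

lemma splits_in_three_homeomorphism:
  assumes h: "homeomorphism A B f g" and x: "x \<in> A" and split: "splits_in_three A x"
  shows "splits_in_three B (f x)"
proof -
  obtain U1 U2 U3 where U: "openin (top_of_set A) U1" "openin (top_of_set A) U2"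
     "openin (top_of_set A) U3" "U1 \<noteq> {}" "U2 \<noteq> {}" "U3 \<noteq> {}"
     "U1 \<inter> U2 = {}" "U1 \<inter> U3 = {}" "U2 \<inter> U3 = {}" "U1 \<union> U2 \<union> U3 = A - {x}"
    using split unfolding splits_in_three_def by blast
  have inj: "inj_on f A" using h by (metis homeomorphism_def inj_on_inverseI)
  have "U1 \<subseteq> A" "U2 \<subseteq> A" "U3 \<subseteq> A" using U(10) by auto
  then have disj: "f ` U1 \<inter> f ` U2 = {}" "f ` U1 \<inter> f ` U3 = {}" "f ` U2 \<inter> f ` U3 = {}"
    using inj U(7-9) by (metis image_empty inj_on_image_Int)+
  have cover: "f ` U1 \<union> f ` U2 \<union> f ` U3 = B - {f x}"
  proof -
    have "f ` U1 \<union> f ` U2 \<union> f ` U3 = f ` (A - {x})" using U(10) by (metis image_Un)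
    also have "\<dots> = f ` A - {f x}" using inj x by (simp add: inj_on_image_set_diff)
    finally show ?thesis using h by (simp add: homeomorphism_def)
  qed
  have opens: "openin (top_of_set B) (f ` U1)" "openin (top_of_set B) (f ` U2)"
     "openin (top_of_set B) (f ` U3)" using U(1-3) h homeomorphism_imp_open_map by blast+
  have nonempty: "f ` U1 \<noteq> {}" "f ` U2 \<noteq> {}" "f ` U3 \<noteq> {}" using U(4-6) by auto
  show ?thesis unfolding splits_in_three_def
    by (intro exI[of _ "f ` U1"] exI[of _ "f ` U2"] exI[of _ "f ` U3"] conjI)
      (fact opens nonempty disj cover)+
qed

definition id_outside :: "'a set \<Rightarrow> ('a \<Rightarrow> 'a) \<Rightarrow> 'a \<Rightarrow> 'a" where
  "id_outside A f z = (if z \<in> A then f z else z)"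

lemma id_outside_in_Homeo:
  assumes "homeomorphism A A f g" shows "id_outside A f \<in> Homeo A"
proof -
  have "homeomorphism A A (id_outside A f) (id_outside A g)"
    by (rule homeomorphism_cong[OF assms]) (auto simp: id_outside_def)
  then show ?thesis unfolding Homeo_def by (auto simp: id_outside_def)
qed

definition radial_power :: "real \<Rightarrow> 'a::real_normed_vector \<Rightarrow> 'a" where
  "radial_power p z = (norm z powr p / norm z) *\<^sub>R z"

lemma norm_radial_power: "norm (radial_power p z) = norm z powr p"
  by (cases "z = 0") (simp_all add: radial_power_def)

lemma radial_power_scaleR:
  assumes "norm v = 1" "0 \<le> t" shows "radial_power p (t *\<^sub>R v) = (t powr p) *\<^sub>R v"
proof (cases "t = 0")
  case False
  then have "norm (t *\<^sub>R v) = t" using assms by simp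
  then show ?thesis using False by (simp add: radial_power_def)
qed (simp add: radial_power_def)

lemma radial_power_inverse:
  assumes "p \<noteq> 0" shows "radial_power (1/p) (radial_power p z) = z"
proof (cases "z = 0")
  case False
  define r where "r = norm z"
  have r: "r > 0" "r powr p > 0" using False by (simp_all add: r_def)
  have "norm (radial_power p z) = r powr p" by (simp add: norm_radial_power r_def)
  then have "radial_power (1/p) (radial_power p z) = ((r powr p) powr (1/p) / r powr p) *\<^sub>R radial_power p z"
    by (simp only: radial_power_def[of "1/p"])
  also have "\<dots> = (r / r powr p) *\<^sub>R (r powr p / r) *\<^sub>R z"
    using assms r by (simp add: powr_powr radial_power_def r_def)
  also have "\<dots> = z" using r by simp
  finally show ?thesis .
qed (simp add: radial_power_def)

lemma continuous_on_radial_power: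
  fixes S :: "'a::real_normed_vector set"
  assumes p: "p > 0" shows "continuous_on S (radial_power p)"
proof (rule continuous_at_imp_continuous_on, intro ballI)
  fix z :: 'a
  show "isCont (radial_power p) z"
  proof (cases "z = 0")
    case True
    have "((\<lambda>x. norm x powr p) \<longlongrightarrow> 0) (at (0::'a))"
      by (rule tendsto_zero_powrI[OF tendsto_norm_zero[OF tendsto_ident_at] tendsto_const _ p]) simp
    then have "((\<lambda>x. norm (radial_power p x)) \<longlongrightarrow> 0) (at (0::'a))" by (simp add: norm_radial_power)
    then have "(radial_power p \<longlongrightarrow> 0) (at (0::'a))" by (rule tendsto_norm_zero_cancel)
    then show ?thesis using True by (simp add: isCont_def radial_power_def)
  next
    case False
    then show ?thesis unfolding radial_power_def by (intro continuous_intros) simp_all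
  qed
qed

lemma in_HomeoE:
  assumes "h \<in> Homeo A" obtains g where "homeomorphism A A h g"
  using assms by (auto simp: Homeo_def)

lemma closed_invariant_HomeoI:
  assumes "G \<subseteq> Homeo A" "Y \<noteq> {}" "Y \<subseteq> A" "closed Y"
    and "\<And>f g y. homeomorphism A A f g \<Longrightarrow> y \<in> Y \<Longrightarrow> f y \<in> Y"
  shows "closed_invariant G A Y"
proof -
  have "f y \<in> Y" if "f \<in> G" "y \<in> Y" for f y
  proof -
    from that(1) assms(1) have "f \<in> Homeo A" by blast
    then obtain g where "homeomorphism A A f g" by (rule in_HomeoE)
    then show ?thesis using assms(5) that(2) by blast
  qed
  then show ?thesis using assms(2-4) by (auto simp: closed_invariant_def invariant_set_def intro: closed_subset)
qed

lemma enat_le_height: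
  assumes "\<forall>i\<le>k. closed_invariant G A (Y i)" "\<forall>i<k. Y i \<subset> Y (Suc i)" "Y k = A"
  shows "enat k \<le> height G A"
  unfolding height_def using assms by (intro Sup_upper) blast

lemma height_le:
  assumes "\<And>k Y. \<forall>i\<le>k. closed_invariant G A (Y i) \<Longrightarrow> \<forall>i<k. Y i \<subset> Y (Suc i) \<Longrightarrow> Y k = A \<Longrightarrow> k \<le> m"
  shows "height G A \<le> enat m"
  unfolding height_def using assms by (auto intro!: Sup_least)

locale star =
  fixes n :: nat
  assumes three_le_n: "3 \<le> n"
begin

definition vertex :: "nat \<Rightarrow> complex" where
  "vertex k = cis (2 * pi * real k / real n)"

definition edge :: "nat \<Rightarrow> complex set" where
  "edge k = closed_segment 0 (vertex k)"

abbreviation ends :: "complex set" where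
  "ends \<equiv> star_graph n \<inter> sphere 0 1"

lemma star_graph_eq: "star_graph n = (\<Union>k\<in>{1..n}. edge k)"
  by (simp add: star_graph_def edge_def vertex_def)

lemma mem_star_graph: "z \<in> star_graph n \<longleftrightarrow> (\<exists>k\<in>{1..n}. z \<in> edge k)"
  by (simp add: star_graph_eq)

lemma norm_vertex [simp]: "norm (vertex k) = 1"
  by (simp add: vertex_def)

lemma vertex_nonzero [simp]: "vertex k \<noteq> 0"
  using norm_vertex[of k] by (metis norm_zero zero_neq_one)

lemma vertex_eq_iff: "vertex j = vertex k \<longleftrightarrow> j mod n = k mod n"
proof -
  have "vertex k = exp (2 * of_real pi * \<i> * of_nat k / of_nat n)" for k
    by (simp add: vertex_def cis_conv_exp mult_ac)
  then show ?thesis using complex_root_unity_eq[of n j k] three_le_n by simp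
qed

lemma vertex_add: "vertex j * vertex k = vertex (j + k)"
  by (simp add: vertex_def cis_mult add_divide_distrib distrib_left)

lemma inj_on_vertex: "inj_on vertex {1..n}"
proof (rule inj_onI)
  fix j k assume j: "j \<in> {1..n}" and k: "k \<in> {1..n}" and "vertex j = vertex k"
  then have "j mod n = k mod n" by (simp add: vertex_eq_iff)
  moreover have "m mod n = (if m = n then 0 else m)" if "m \<in> {1..n}" for m
    using that by auto
  ultimately show "j = k" using j k by (auto split: if_splits)
qed

lemma vertex_representative: "\<exists>k'\<in>{1..n}. vertex k = vertex k'"
proof -
  define k' where "k' = (if k mod n = 0 then n else k mod n)"
  have "k' \<in> {1..n}" using three_le_n by (auto simp: k'_def Suc_le_eq)
  moreover have "k mod n = k' mod n" by (simp add: k'_def)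
  ultimately show ?thesis using vertex_eq_iff by blast
qed

lemma vertex_rotate: "i \<le> n \<Longrightarrow> vertex (n + j - i) * vertex i = vertex j"
  using vertex_add[of "n + j - i" i] vertex_eq_iff[of "n + j" j] by simp

lemma vertex_inverse: "vertex (m * (n - 1)) * vertex m = 1"
proof -
  have "m * (n - 1) + m = m * n" using three_le_n by (simp add: algebra_simps)
  then have "vertex (m * (n - 1)) * vertex m = vertex (m * n)" by (simp add: vertex_add)
  also have "\<dots> = vertex 0" by (simp add: vertex_eq_iff)
  finally show ?thesis by (simp add: vertex_def)
qed

lemma mem_edge: "z \<in> edge k \<longleftrightarrow> (\<exists>t. 0 \<le> t \<and> t \<le> 1 \<and> z = t *\<^sub>R vertex k)"
  by (auto simp: edge_def closed_segment_def)

lemma edge_eq_scaleR_norm: "z \<in> edge k \<Longrightarrow> z = norm z *\<^sub>R vertex k"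
  by (auto simp: mem_edge)

lemma norm_le_1_if_edge: "z \<in> edge k \<Longrightarrow> norm z \<le> 1"
  by (auto simp: mem_edge)

lemma edge_eq_if_norm_eq: "z \<in> edge k \<Longrightarrow> z' \<in> edge k \<Longrightarrow> norm z = norm z' \<Longrightarrow> z = z'"
  by (metis edge_eq_scaleR_norm)

lemma zero_in_edge [simp]: "0 \<in> edge k" and vertex_in_edge [simp]: "vertex k \<in> edge k"
  and closed_edge [simp]: "closed (edge k)" and connected_edge [simp]: "connected (edge k)"
  by (simp_all add: edge_def)

lemma edge_Int_edge:
  assumes "j \<in> {1..n}" "k \<in> {1..n}" "j \<noteq> k" "z \<in> edge j" "z \<in> edge k"
  shows "z = 0"
proof (rule ccontr)
  assume "z \<noteq> 0"
  then have "vertex j = vertex k"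
    using edge_eq_scaleR_norm[OF assms(4)] edge_eq_scaleR_norm[OF assms(5)] by (metis scaleR_cancel_left norm_eq_zero)
  then show False using inj_on_vertex assms(1-3) by (auto dest: inj_onD)
qed

lemma zero_in_star_graph [simp]: "0 \<in> star_graph n"
  using three_le_n by (auto simp: mem_star_graph intro: bexI[of _ 1])

lemma edge_subset_star_graph: "k \<in> {1..n} \<Longrightarrow> edge k \<subseteq> star_graph n"
  using mem_star_graph by blast

lemma norm_le_1_if_star_graph: "z \<in> star_graph n \<Longrightarrow> norm z \<le> 1"
  using mem_star_graph norm_le_1_if_edge by blast

lemma closed_star_graph: "closed (star_graph n)"
  by (simp add: star_graph_eq closed_UN)

lemma connected_edge_part: "is_interval I \<Longrightarrow> connected {z \<in> edge k. norm z \<in> I}"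
proof -
  assume I: "is_interval I"
  have "{z \<in> edge k. norm z \<in> I} = (\<lambda>t. t *\<^sub>R vertex k) ` ({0..1} \<inter> I)"
    by (auto simp: mem_edge image_iff)
  moreover have "is_interval ({0..1} \<inter> I)" using I by (simp add: is_interval_Int)
  ultimately show ?thesis
    by (simp add: connected_continuous_image is_interval_connected continuous_intros)
qed

lemma closed_edge_part: "closed I \<Longrightarrow> closed {z \<in> edge k. norm z \<in> I}"
proof -
  assume "closed I"
  then have "closed (edge k \<inter> norm -` I)"
    by (intro closed_Int closed_edge continuous_closed_vimage) (auto intro: continuous_intros)
  moreover have "{z \<in> edge k. norm z \<in> I} = edge k \<inter> norm -` I" by auto
  ultimately show ?thesis by simp
qed

definition outer_part :: "nat \<Rightarrow> complex \<Rightarrow> complex set" where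
  "outer_part i x = {z \<in> edge i. norm x < norm z}"

definition inner_part :: "nat \<Rightarrow> complex \<Rightarrow> complex set" where
  "inner_part i x = (\<Union>k\<in>{1..n}-{i}. edge k) \<union> {z \<in> edge i. norm z < norm x}"

lemma connected_outer_part: "connected (outer_part i x)"
  using connected_edge_part[of "{norm x<..}" i] by (simp add: outer_part_def is_interval_oi)

context
  fixes i x
  assumes i: "i \<in> {1..n}" and x: "x \<in> edge i" "x \<noteq> 0"
begin

lemma star_graph_minus_point: "star_graph n - {x} = outer_part i x \<union> inner_part i x"
proof
  show "star_graph n - {x} \<subseteq> outer_part i x \<union> inner_part i x"
  proof
    fix z assume z: "z \<in> star_graph n - {x}"
    then obtain k where k: "k \<in> {1..n}" "z \<in> edge k" using mem_star_graph by blast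
    show "z \<in> outer_part i x \<union> inner_part i x"
    proof (cases "k = i")
      case True
      then have "norm z \<noteq> norm x" using z k(2) x(1) edge_eq_if_norm_eq by blast
      then consider "norm x < norm z" | "norm z < norm x" by linarith
      then show ?thesis unfolding outer_part_def inner_part_def using True k(2) by cases blast+
    next
      case False
      then show ?thesis unfolding inner_part_def using k by blast
    qed
  qed
  have "outer_part i x \<subseteq> star_graph n - {x}"
    using edge_subset_star_graph[OF i] unfolding outer_part_def by force
  moreover have "inner_part i x \<subseteq> star_graph n - {x}"
  proof
    fix z assume "z \<in> inner_part i x"
    then consider k where "k \<in> {1..n}" "k \<noteq> i" "z \<in> edge k" | "z \<in> edge i" "norm z < norm x"
      unfolding inner_part_def by blast
    then show "z \<in> star_graph n - {x}"
    proof cases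
      case 1
      then have "z \<noteq> x" using edge_Int_edge[OF 1(1) i 1(2)] x by blast
      then show ?thesis using 1 edge_subset_star_graph by blast
    next
      case 2
      then show ?thesis using edge_subset_star_graph[OF i] by auto
    qed
  qed
  ultimately show "outer_part i x \<union> inner_part i x \<subseteq> star_graph n - {x}" by blast
qed

lemma outer_Int_inner_part: "outer_part i x \<inter> inner_part i x = {}"
proof -
  have False if z: "z \<in> outer_part i x" "z \<in> inner_part i x" for z
  proof -
    have zi: "z \<in> edge i" "norm x < norm z" using z(1) by (auto simp: outer_part_def)
    from z(2) consider k where "k \<in> {1..n}" "k \<noteq> i" "z \<in> edge k" | "norm z < norm x"
      unfolding inner_part_def by blast
    then show False
    proof cases
      case 1
      then show False using edge_Int_edge[OF 1(1) i 1(2,3) zi(1)] zi(2) by simp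
    qed (use zi in simp)
  qed
  then show ?thesis by blast
qed

lemma connected_inner_part: "connected (inner_part i x)"
proof -
  define P where "P = {z \<in> edge i. norm z \<in> {..<norm x}}"
  have "inner_part i x = \<Union>(insert P (edge ` ({1..n}-{i})))"
    by (auto simp: inner_part_def P_def)
  moreover have "connected (\<Union>(insert P (edge ` ({1..n}-{i}))))"
  proof (rule connected_Union)
    show "connected S" if "S \<in> insert P (edge ` ({1..n}-{i}))" for S
      using that connected_edge_part[of "{..<norm x}" i] by (auto simp: P_def)
    have "0 \<in> \<Inter>(insert P (edge ` ({1..n}-{i})))" using x by (auto simp: P_def)
    then show "\<Inter>(insert P (edge ` ({1..n}-{i}))) \<noteq> {}" by blast
  qed
  ultimately show ?thesis by simp
qed

lemma closedin_outer_part: "closedin (top_of_set (star_graph n - {x})) (outer_part i x)"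
proof -
  define C where "C = {z \<in> edge i. norm z \<in> {norm x..}}"
  have "outer_part i x \<subseteq> star_graph n - {x}" using star_graph_minus_point by blast
  then have "outer_part i x = (star_graph n - {x}) \<inter> C"
    using edge_eq_if_norm_eq[OF _ x(1)] by (force simp: outer_part_def C_def)
  moreover have "closed C" unfolding C_def by (intro closed_edge_part closed_atLeast)
  ultimately show ?thesis by (simp add: closedin_closed_Int)
qed

lemma closedin_inner_part: "closedin (top_of_set (star_graph n - {x})) (inner_part i x)"
proof -
  define C where "C = (\<Union>k\<in>{1..n}-{i}. edge k) \<union> {z \<in> edge i. norm z \<in> {..norm x}}"
  have "inner_part i x \<subseteq> star_graph n - {x}" using star_graph_minus_point by blast
  then have "inner_part i x = (star_graph n - {x}) \<inter> C"
    using edge_eq_if_norm_eq[OF _ x(1)] by (force simp: inner_part_def C_def)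
  moreover have "closed C" unfolding C_def by (intro closed_Un closed_UN closed_edge_part) auto
  ultimately show ?thesis by (simp add: closedin_closed_Int)
qed

end

lemma not_splits_in_three_nonzero:
  assumes "x \<in> star_graph n" "x \<noteq> 0"
  shows "\<not> splits_in_three (star_graph n) x"
proof -
  obtain i where i: "i \<in> {1..n}" "x \<in> edge i" using assms(1) mem_star_graph by blast
  show ?thesis
    by (rule not_splits_in_three_if_connected_Un[OF star_graph_minus_point[OF i assms(2)]
          connected_outer_part connected_inner_part[OF i assms(2)]])
qed

definition branch :: "nat set \<Rightarrow> complex set" where
  "branch K = (\<Union>k\<in>K. edge k) - {0}"

lemma openin_branch:
  assumes K: "K \<subseteq> {1..n}" shows "openin (top_of_set (star_graph n)) (branch K)"
proof -
  define C where "C = {0} \<union> (\<Union>l\<in>{1..n}-K. edge l)"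
  have "branch K = star_graph n \<inter> - C"
  proof
    show "branch K \<subseteq> star_graph n \<inter> - C"
    proof
      fix z assume "z \<in> branch K"
      then obtain k where k: "k \<in> K" "z \<in> edge k" "z \<noteq> 0" by (auto simp: branch_def)
      have "z \<notin> edge l" if l: "l \<in> {1..n}-K" for l
      proof -
        have "k \<in> {1..n}" "k \<noteq> l" using k(1) K l by auto
        then show ?thesis using edge_Int_edge[of k l z] k(2,3) l by blast
      qed
      moreover have "z \<in> star_graph n" using k(1,2) K edge_subset_star_graph by blast
      ultimately show "z \<in> star_graph n \<inter> - C" using k(3) by (auto simp: C_def)
    qed
    show "star_graph n \<inter> - C \<subseteq> branch K"
    proof
      fix z assume z: "z \<in> star_graph n \<inter> - C"
      then obtain k where "k \<in> {1..n}" "z \<in> edge k" by (auto simp: mem_star_graph)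
      moreover from this have "k \<in> K" using z by (auto simp: C_def)
      ultimately show "z \<in> branch K" using z by (auto simp: C_def branch_def)
    qed
  qed
  moreover have "closed C" unfolding C_def by (intro closed_Un closed_UN) auto
  ultimately show ?thesis by (simp add: openin_open_Int open_Compl)
qed

lemma branch_disjoint:
  assumes "K \<inter> L = {}" "K \<union> L \<subseteq> {1..n}" shows "branch K \<inter> branch L = {}"
proof -
  have False if z: "z \<in> branch K" "z \<in> branch L" for z
  proof -
    obtain k l where kl: "k \<in> K" "l \<in> L" "z \<in> edge k" "z \<in> edge l" "z \<noteq> 0"
      using z by (auto simp: branch_def)
    then have "k \<in> {1..n}" "l \<in> {1..n}" "k \<noteq> l" using assms by auto
    then show False using edge_Int_edge[of k l z] kl(3-5) by blast
  qed
  then show ?thesis by blast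
qed

lemma vertex_in_branch: "k \<in> K \<Longrightarrow> vertex k \<in> branch K"
  unfolding branch_def using vertex_in_edge[of k] vertex_nonzero[of k] by blast

lemma branch_Un: "branch (K \<union> L) = branch K \<union> branch L"
  by (auto simp: branch_def)

lemma splits_in_three_zero: "splits_in_three (star_graph n) 0"
proof -
  have "{1} \<union> {2} \<union> {3..n} = {1..n}" using three_le_n by auto
  then have cover: "branch {1} \<union> branch {2} \<union> branch {3..n} = star_graph n - {0}"
    by (metis branch_Un branch_def star_graph_eq)
  have disj: "branch {1} \<inter> branch {2} = {}" "branch {1} \<inter> branch {3..n} = {}"
    "branch {2} \<inter> branch {3..n} = {}"
    using three_le_n by (auto intro!: branch_disjoint)
  have opens: "openin (top_of_set (star_graph n)) (branch {1})"
    "openin (top_of_set (star_graph n)) (branch {2})"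
    "openin (top_of_set (star_graph n)) (branch {3..n})"
    using three_le_n by (auto intro!: openin_branch)
  have nonempty: "branch {1} \<noteq> {}" "branch {2} \<noteq> {}" "branch {3..n} \<noteq> {}"
    using vertex_in_branch[of 1 "{1}"] vertex_in_branch[of 2 "{2}"] vertex_in_branch[of 3 "{3..n}"]
      three_le_n by auto
  show ?thesis unfolding splits_in_three_def
    by (intro exI[of _ "branch {1}"] exI[of _ "branch {2}"] exI[of _ "branch {3..n}"] conjI)
      (fact opens nonempty disj cover)+
qed

lemma homeomorphism_fixes_zero:
  assumes h: "homeomorphism (star_graph n) (star_graph n) f g" shows "f 0 = 0"
proof (rule ccontr)
  assume "f 0 \<noteq> 0"
  moreover have "f 0 \<in> star_graph n" using h by (auto simp: homeomorphism_def)
  moreover have "splits_in_three (star_graph n) (f 0)"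
    by (rule splits_in_three_homeomorphism[OF h zero_in_star_graph splits_in_three_zero])
  ultimately show False using not_splits_in_three_nonzero by blast
qed

lemma ends_eq: "ends = vertex ` {1..n}"
proof
  show "ends \<subseteq> vertex ` {1..n}"
    using edge_eq_scaleR_norm by (fastforce simp: mem_star_graph)
  show "vertex ` {1..n} \<subseteq> ends"
    using edge_subset_star_graph by fastforce
qed

lemma connected_star_graph_minus_vertex:
  assumes i: "i \<in> {1..n}" shows "connected (star_graph n - {vertex i})"
proof -
  have "outer_part i (vertex i) = {}" using norm_le_1_if_edge by (force simp: outer_part_def)
  then show ?thesis
    using star_graph_minus_point[OF i vertex_in_edge vertex_nonzero]
      connected_inner_part[OF i vertex_in_edge vertex_nonzero] by simp
qed

lemma not_connected_star_graph_minus_point: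
  assumes "x \<in> star_graph n" "x \<noteq> 0" "norm x < 1"
  shows "\<not> connected (star_graph n - {x})"
proof -
  obtain i where i: "i \<in> {1..n}" "x \<in> edge i" using assms(1) mem_star_graph by blast
  have "vertex i \<in> outer_part i x" using assms(3) by (simp add: outer_part_def)
  moreover have "0 \<in> inner_part i x" using assms(2) by (simp add: inner_part_def)
  ultimately show ?thesis
    using star_graph_minus_point[OF i assms(2)] outer_Int_inner_part[OF i assms(2)]
      closedin_outer_part[OF i assms(2)] closedin_inner_part[OF i assms(2)]
    unfolding connected_closedin by blast
qed

lemma homeomorphism_preserves_ends:
  assumes h: "homeomorphism (star_graph n) (star_graph n) f g" and z: "z \<in> ends"
  shows "f z \<in> ends"
proof (rule ccontr)
  assume not_end: "f z \<notin> ends"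
  obtain i where i: "i \<in> {1..n}" "z = vertex i" using z ends_eq by auto
  have fz: "f z \<in> star_graph n" using h z by (auto simp: homeomorphism_def)
  have "f z \<noteq> 0"
  proof
    assume "f z = 0"
    then have "g (f z) = g (f 0)" using homeomorphism_fixes_zero[OF h] by simp
    then have "z = 0" using h z by (simp add: homeomorphism_apply1)
    then show False using z by simp
  qed
  moreover have "norm (f z) < 1" using not_end fz norm_le_1_if_star_graph[OF fz] by auto
  moreover have "connected (star_graph n - {f z})"
  proof -
    have "inj_on f (star_graph n)" using h by (metis homeomorphism_def inj_on_inverseI)
    then have "f ` (star_graph n - {z}) = star_graph n - {f z}"
      using h z by (simp add: inj_on_image_set_diff homeomorphism_def)
    moreover have "continuous_on (star_graph n - {z}) f"
      using h by (meson Diff_subset continuous_on_subset homeomorphism_def)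
    ultimately show ?thesis
      using connected_star_graph_minus_vertex[OF i(1)] i(2) by (metis connected_continuous_image)
  qed
  ultimately show False using not_connected_star_graph_minus_point[OF fz] by blast
qed

lemma closed_invariant_zero:
  assumes "G \<subseteq> Homeo (star_graph n)" shows "closed_invariant G (star_graph n) {0}"
  by (rule closed_invariant_HomeoI[OF assms]) (simp_all add: homeomorphism_fixes_zero)

lemma closed_invariant_insert_zero_ends:
  assumes "G \<subseteq> Homeo (star_graph n)" shows "closed_invariant G (star_graph n) (insert 0 ends)"
proof (rule closed_invariant_HomeoI[OF assms])
  show "closed (insert 0 ends)" by (intro closed_insert closed_Int closed_star_graph closed_sphere)
  fix f g y assume h: "homeomorphism (star_graph n) (star_graph n) f g" and "y \<in> insert 0 ends"
  then show "f y \<in> insert 0 ends"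
    using homeomorphism_fixes_zero[OF h] homeomorphism_preserves_ends[OF h] by blast
qed auto

lemma closed_invariant_star_graph:
  assumes "G \<subseteq> Homeo (star_graph n)" shows "closed_invariant G (star_graph n) (star_graph n)"
proof (rule closed_invariant_HomeoI[OF assms])
  show "star_graph n \<noteq> {}" using zero_in_star_graph by blast
qed (auto simp: closed_star_graph homeomorphism_def)

lemma two_le_height:
  assumes G: "G \<subseteq> Homeo (star_graph n)" shows "2 \<le> height G (star_graph n)"
proof -
  define Y where "Y i = (if i = 0 then {0} else if i = 1 then insert 0 ends else star_graph n)"
    for i :: nat
  have "vertex 1 \<in> edge 1" "(1/2) *\<^sub>R vertex 1 \<in> edge 1"
    unfolding mem_edge by (intro exI[of _ 1] exI[of _ "1/2"], simp)+
  then have end1: "vertex 1 \<in> ends" and half: "(1/2) *\<^sub>R vertex 1 \<in> star_graph n"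
    using three_le_n edge_subset_star_graph[of 1] by auto
  have "(1/2) *\<^sub>R vertex 1 \<notin> insert 0 ends" by simp
  then have "{0} \<subset> insert 0 ends" "insert 0 ends \<subset> star_graph n"
    using end1 half vertex_nonzero[of 1] zero_in_star_graph unfolding psubset_eq by blast+
  then have chain: "\<forall>i<2. Y i \<subset> Y (Suc i)" by (auto simp: Y_def less_Suc_eq numeral_2_eq_2)
  have "\<forall>i\<le>2. closed_invariant G (star_graph n) (Y i)"
    using closed_invariant_zero[OF G] closed_invariant_insert_zero_ends[OF G]
      closed_invariant_star_graph[OF G] by (simp add: Y_def)
  then have "enat 2 \<le> height G (star_graph n)"
    by (rule enat_le_height[OF _ chain]) (simp add: Y_def)
  then show ?thesis by (simp add: enat_numeral)
qed

lemma rotation_in_star_graph: "z \<in> star_graph n \<Longrightarrow> vertex m * z \<in> star_graph n"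
proof -
  assume "z \<in> star_graph n"
  then obtain k t where k: "k \<in> {1..n}" "0 \<le> t" "t \<le> 1" "z = t *\<^sub>R vertex k"
    by (auto simp: mem_star_graph mem_edge)
  obtain k' where k': "k' \<in> {1..n}" "vertex (m + k) = vertex k'" using vertex_representative by blast
  have "vertex m * z = t *\<^sub>R vertex k'" using k(4) k'(2) by (simp add: vertex_add)
  then have "vertex m * z \<in> edge k'" using k by (auto simp: mem_edge)
  then show ?thesis using edge_subset_star_graph[OF k'(1)] by blast
qed

lemma homeomorphism_rotation:
  "homeomorphism (star_graph n) (star_graph n) ((*) (vertex m)) ((*) (vertex (m * (n - 1))))"
proof (rule homeomorphismI)
  have inv: "vertex (m * (n - 1)) * vertex m = 1" by (rule vertex_inverse)
  show "\<And>x. vertex (m * (n - 1)) * (vertex m * x) = x" using inv by (metis mult.assoc mult_1)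
  show "\<And>y. vertex m * (vertex (m * (n - 1)) * y) = y" using inv by (metis mult.assoc mult.commute mult_1)
qed (auto intro: continuous_intros rotation_in_star_graph)

lemma radial_power_in_star_graph:
  assumes "p > 0" "z \<in> star_graph n" shows "radial_power p z \<in> star_graph n"
proof -
  obtain k t where k: "k \<in> {1..n}" "0 \<le> t" "t \<le> 1" "z = t *\<^sub>R vertex k"
    using assms(2) by (auto simp: mem_star_graph mem_edge)
  have "radial_power p z = (t powr p) *\<^sub>R vertex k" using k by (simp add: radial_power_scaleR)
  moreover have "t powr p \<le> 1" using assms(1) k(2,3) by (simp add: powr_le1)
  ultimately have "radial_power p z \<in> edge k" by (auto simp: mem_edge)
  then show ?thesis using edge_subset_star_graph[OF k(1)] by blast
qed

lemma homeomorphism_radial_power: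
  assumes "p > 0"
  shows "homeomorphism (star_graph n) (star_graph n) (radial_power p) (radial_power (1/p))"
proof (rule homeomorphismI)
  show "\<And>x. radial_power (1/p) (radial_power p x) = x" using assms by (simp add: radial_power_inverse)
  show "\<And>y. radial_power p (radial_power (1/p) y) = y"
    using assms radial_power_inverse[of "1/p"] by simp
qed (use assms in \<open>auto intro: continuous_on_radial_power radial_power_in_star_graph\<close>)

lemma Homeo_transitive_on_interior:
  assumes y: "y \<in> star_graph n" "0 < norm y" "norm y < 1"
    and z: "z \<in> star_graph n" "0 < norm z" "norm z < 1"
  shows "\<exists>h\<in>Homeo (star_graph n). h y = z"
proof -
  obtain i where i: "i \<in> {1..n}" "y = norm y *\<^sub>R vertex i"
    using y(1) edge_eq_scaleR_norm by (auto simp: mem_star_graph)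
  obtain j where j: "j \<in> {1..n}" "z = norm z *\<^sub>R vertex j"
    using z(1) edge_eq_scaleR_norm by (auto simp: mem_star_graph)
  define p where "p = ln (norm z) / ln (norm y)"
  have p: "p > 0" using y z by (simp add: p_def divide_neg_neg)
  have "norm y powr p = norm z" using y z by (simp add: powr_def p_def)
  then have "radial_power p y = norm z *\<^sub>R vertex i"
    using radial_power_scaleR[of "vertex i" "norm y" p] i(2) by simp
  then have "vertex (n + j - i) * radial_power p y = z"
    using vertex_rotate[of i j] i(1) j(2) by simp
  moreover have "homeomorphism (star_graph n) (star_graph n) ((*) (vertex (n + j - i)) \<circ> radial_power p)
      (radial_power (1/p) \<circ> (*) (vertex ((n + j - i) * (n - 1))))"
    by (rule homeomorphism_compose[OF homeomorphism_radial_power[OF p] homeomorphism_rotation])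
  ultimately show ?thesis using y(1)
    by (intro bexI[of _ "id_outside (star_graph n) ((*) (vertex (n + j - i)) \<circ> radial_power p)"])
      (auto simp: id_outside_def id_outside_in_Homeo)
qed

lemma Homeo_transitive_on_ends:
  assumes "y \<in> ends" "z \<in> ends" shows "\<exists>h\<in>Homeo (star_graph n). h y = z"
proof -
  obtain i j where ij: "i \<in> {1..n}" "j \<in> {1..n}" "y = vertex i" "z = vertex j"
    using assms ends_eq by auto
  have "vertex (n + j - i) * y = z" using ij by (simp add: vertex_rotate)
  then show ?thesis using assms(1) id_outside_in_Homeo[OF homeomorphism_rotation]
    by (intro bexI[of _ "id_outside (star_graph n) ((*) (vertex (n + j - i)))"]) (auto simp: id_outside_def)
qed

lemma closed_invariant_Homeo_eq_star_graph:
  assumes Y: "closed_invariant (Homeo (star_graph n)) (star_graph n) Y"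
    and y: "y \<in> Y" "y \<notin> insert 0 ends"
  shows "Y = star_graph n"
proof -
  have YA: "Y \<subseteq> star_graph n" and inv: "\<And>h y. h \<in> Homeo (star_graph n) \<Longrightarrow> y \<in> Y \<Longrightarrow> h y \<in> Y"
    using Y by (auto simp: closed_invariant_def invariant_set_def)
  obtain C where C: "closed C" "Y = star_graph n \<inter> C"
    using Y by (auto simp: closed_invariant_def closedin_closed)
  have "y \<in> star_graph n" using YA y(1) by blast
  then have y_interior: "y \<in> star_graph n" "0 < norm y" "norm y < 1"
    using y(2) norm_le_1_if_star_graph[of y] by auto
  have "open_segment 0 (vertex k) \<subseteq> C" if k: "k \<in> {1..n}" for k
  proof
    fix z assume "z \<in> open_segment 0 (vertex k)"
    then have z: "z \<in> edge k" "z \<noteq> 0" "z \<noteq> vertex k" by (auto simp: open_segment_def edge_def)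
    have "norm z \<noteq> 1" using z edge_eq_scaleR_norm[OF z(1)] by force
    then have "z \<in> star_graph n" "0 < norm z" "norm z < 1"
      using z edge_subset_star_graph[OF k] norm_le_1_if_edge[OF z(1)] by auto
    then obtain h where "h \<in> Homeo (star_graph n)" "h y = z"
      using Homeo_transitive_on_interior[OF y_interior] by blast
    then show "z \<in> C" using inv y(1) C(2) by blast
  qed
  then have "closure (open_segment 0 (vertex k)) \<subseteq> C" if "k \<in> {1..n}" for k
    using closure_minimal[OF _ C(1)] that by blast
  then have "edge k \<subseteq> C" if "k \<in> {1..n}" for k
    using that vertex_nonzero[of k] by (simp add: edge_def closure_open_segment eq_commute[of 0])
  then have "star_graph n \<subseteq> C" unfolding star_graph_eq by blast
  then show ?thesis using C(2) by blast
qed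

lemma ends_subset_closed_invariant_Homeo:
  assumes Y: "closed_invariant (Homeo (star_graph n)) (star_graph n) Y" and y: "y \<in> Y" "y \<in> ends"
  shows "ends \<subseteq> Y"
proof
  fix z assume "z \<in> ends"
  then obtain h where "h \<in> Homeo (star_graph n)" "h y = z" using Homeo_transitive_on_ends[OF y(2)] by blast
  then show "z \<in> Y" using Y y(1) unfolding closed_invariant_def invariant_set_def by blast
qed

lemma closed_invariant_Homeo_cases:
  assumes Y: "closed_invariant (Homeo (star_graph n)) (star_graph n) Y" and ne: "Y \<noteq> star_graph n"
  shows "Y = {0} \<or> Y = ends \<or> Y = insert 0 ends"
proof -
  have nonempty: "Y \<noteq> {}" using Y by (simp add: closed_invariant_def invariant_set_def)
  have sub: "Y \<subseteq> insert 0 ends" using closed_invariant_Homeo_eq_star_graph[OF Y] ne by blast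
  show ?thesis
  proof (cases "Y \<inter> ends = {}")
    case True
    then show ?thesis using sub nonempty by blast
  next
    case False
    then have "ends \<subseteq> Y" using ends_subset_closed_invariant_Homeo[OF Y] by blast
    then show ?thesis using sub by blast
  qed
qed

lemma closed_invariant_Homeo_psubset:
  assumes Y: "closed_invariant (Homeo (star_graph n)) (star_graph n) Y"
    and Z: "closed_invariant (Homeo (star_graph n)) (star_graph n) Z"
    and "Y \<subset> Z" "Z \<noteq> star_graph n"
  shows "Z = insert 0 ends" "Y \<noteq> insert 0 ends"
proof -
  have "Y \<noteq> {}" "Z \<subseteq> star_graph n" using Y Z by (simp_all add: closed_invariant_def invariant_set_def)
  then have "Y \<noteq> star_graph n" using \<open>Y \<subset> Z\<close> by blast
  have "0 \<notin> ends" by simp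
  show "Z = insert 0 ends"
  proof (rule ccontr)
    assume "Z \<noteq> insert 0 ends"
    then have "Z = {0} \<or> Z = ends" using closed_invariant_Homeo_cases[OF Z] assms(4) by blast
    moreover have "Y = {0} \<or> Y = ends \<or> Y = insert 0 ends"
      using closed_invariant_Homeo_cases[OF Y \<open>Y \<noteq> star_graph n\<close>] .
    ultimately show False using \<open>Y \<subset> Z\<close> \<open>Y \<noteq> {}\<close> \<open>0 \<notin> ends\<close> by auto
  qed
  then show "Y \<noteq> insert 0 ends" using \<open>Y \<subset> Z\<close> by blast
qed

lemma height_Homeo_le_two: "height (Homeo (star_graph n)) (star_graph n) \<le> 2"
proof -
  have "k \<le> 2" if ci: "\<forall>i\<le>k. closed_invariant (Homeo (star_graph n)) (star_graph n) (Y i)"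
    and chain: "\<forall>i<k. Y i \<subset> Y (Suc i)" and top: "Y k = star_graph n" for k Y
  proof (rule ccontr)
    assume "\<not> k \<le> 2"
    define a where "a = k - 3"
    have k: "k = Suc (Suc (Suc a))" using \<open>\<not> k \<le> 2\<close> unfolding a_def by arith
    have inv: "closed_invariant (Homeo (star_graph n)) (star_graph n) (Y j)" if "j \<le> Suc (Suc a)" for j
      using that k by (intro ci[rule_format]) simp
    have psub: "Y a \<subset> Y (Suc a)" "Y (Suc a) \<subset> Y (Suc (Suc a))" "Y (Suc (Suc a)) \<subset> star_graph n"
      using chain[rule_format, of a] chain[rule_format, of "Suc a"] chain[rule_format, of "Suc (Suc a)"] top k
      by simp_all
    have "Y (Suc a) = insert 0 ends"
      by (rule closed_invariant_Homeo_psubset(1)[OF inv inv psub(1)]) (use psub in auto)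
    moreover have "Y (Suc a) \<noteq> insert 0 ends"
      by (rule closed_invariant_Homeo_psubset(2)[OF inv inv psub(2)]) (use psub in auto)
    ultimately show False by blast
  qed
  then have "height (Homeo (star_graph n)) (star_graph n) \<le> enat 2" by (rule height_le)
  then show ?thesis by (simp add: numeral_eq_enat)
qed

end

theorem lemma4p1:
  fixes n :: nat
  assumes "n \<ge> 3"
  shows "(\<forall>G. homeo_subgroup G (star_graph n) \<longrightarrow> height G (star_graph n) \<ge> 2)
         \<and> height (Homeo (star_graph n)) (star_graph n) = 2"
proof -
  interpret star n using assms by unfold_locales
  have "\<forall>G. homeo_subgroup G (star_graph n) \<longrightarrow> height G (star_graph n) \<ge> 2"
    by (auto simp: homeo_subgroup_def intro: two_le_height)
  moreover have "height (Homeo (star_graph n)) (star_graph n) = 2"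
    using two_le_height[of "Homeo (star_graph n)"] height_Homeo_le_two by simp
  ultimately show ?thesis by blast
qed

end
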